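(* Let $\{\phi_j\}_{j\in\mathbb Z}$ be the Fourier basis $\phi_j(t)=e^{\mathrm ij\pi t}$, $T=\{t_n\}_{n=1}^N\subseteq[-1,1]$ a set of $N$ scattered data points with density $h$. Then for each $0<\epsilon<1$ there exists $c(\epsilon)>0$ such that if $h\le c(\epsilon)M^{-1}$, then the least-squares problem $\min_z\|UP_Mz-y\|$ over $z$ supported in $\{-M,\dots,M-1\}$ has a unique solution $\check x$, and it satisfies $$\|x-\check x\|\le\left(1+\frac1{\sqrt{1-\epsilon}}\right)\|x-P_Mx\|_{1,w}+\frac1{\sqrt{1-\epsilon}}\eta$$ for any weights $w=\{w_i\}$ with $w_i\ge1$.
   Context: Fourier setting: $D=(-1,1)$, $\nu=1/2$, basis indexed by $\mathbb Z$. $h=\sup_{t\in(-1,1)}\min_n|t-t_n|$; Voronoi cells $V_n=\{t\in(-1,1):|t-t_n|\le|t-t_m|\ \forall m\ne n\}$; $\tau_n=\int_{V_n}\nu$. $U_{n,j}=\sqrt{\tau_n}\phi_j(t_n)$, $j\in\mathbb Z$. $P_M$ is the coordinate projection onto indices $\{-M,\dots,M-1\}$. $\|z\|_{1,w}=\sum_{i\in\mathbb Z}w_i|z_i|$, $\|\cdot\|$ the $\ell^2$ norm. Target $f=\sum_jx_j\phi_j$ with coefficient sequence $x$; data $y=\{\sqrt{\tau_n}(f(t_n)+e_n)\}$, $|e_n|\le\eta$. *)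

theory Defs
  imports "HOL-Analysis.Analysis"
begin

definition fourier :: "int \<Rightarrow> real \<Rightarrow> complex" where
  "fourier j t = exp (\<i> * of_int j * of_real pi * of_real t)"

definition fill_dist :: "nat \<Rightarrow> (nat \<Rightarrow> real) \<Rightarrow> real" where
  "fill_dist N t = Sup ((\<lambda>s. Min ((\<lambda>n. \<bar>s - t n\<bar>) ` {1..N})) ` {-1<..<1})"

definition voronoi :: "nat \<Rightarrow> (nat \<Rightarrow> real) \<Rightarrow> nat \<Rightarrow> real set" where
  "voronoi N t n = {s \<in> {-1<..<1}. \<forall>m\<in>{1..N}. m \<noteq> n \<longrightarrow> \<bar>s - t n\<bar> \<le> \<bar>s - t m\<bar>}"

definition tau :: "nat \<Rightarrow> (nat \<Rightarrow> real) \<Rightarrow> nat \<Rightarrow> real" where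
  "tau N t n = integral (voronoi N t n) (\<lambda>_. 1/2)"

definition Umat :: "nat \<Rightarrow> (nat \<Rightarrow> real) \<Rightarrow> nat \<Rightarrow> int \<Rightarrow> complex" where
  "Umat N t n j = complex_of_real (sqrt (tau N t n)) * fourier j (t n)"

definition projM :: "nat \<Rightarrow> (int \<Rightarrow> complex) \<Rightarrow> int \<Rightarrow> complex" where
  "projM M z j = (if j \<in> {- int M..<int M} then z j else 0)"

definition lsq_residual ::
  "nat \<Rightarrow> (nat \<Rightarrow> real) \<Rightarrow> nat \<Rightarrow> (nat \<Rightarrow> complex) \<Rightarrow> (int \<Rightarrow> complex) \<Rightarrow> real" where
  "lsq_residual N t M y z =
     sqrt (\<Sum>n=1..N. (cmod ((\<Sum>j\<in>{- int M..<int M}. Umat N t n j * projM M z j) - y n))\<^sup>2)"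

definition l2norm :: "(int \<Rightarrow> complex) \<Rightarrow> real" where
  "l2norm z = sqrt (infsum (\<lambda>j. (cmod (z j))\<^sup>2) UNIV)"

definition wl1norm :: "(int \<Rightarrow> real) \<Rightarrow> (int \<Rightarrow> complex) \<Rightarrow> real" where
  "wl1norm w z = infsum (\<lambda>i. w i * cmod (z i)) UNIV"

end

theory Submission
  imports Defs
begin

text \<open>
  On each Voronoi cell, an interval of length at most \<open>2 h\<close> around its node, a trigonometric
  polynomial \<open>p\<close> of degree \<open>M\<close> deviates from its value at the node by at most the integral of
  \<open>|p'|\<close> over the cell. Together with the Cauchy--Schwarz inequality, Parseval's identity and
  Bernstein's bound \<open>\<parallel>p'\<parallel> \<le> \<pi> M \<parallel>p\<parallel>\<close> this yields the lower frame bound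
  \<open>(1 - \<epsilon>) \<parallel>z\<parallel>\<^sup>2 \<le> \<parallel>U P\<^sub>M z\<parallel>\<^sup>2\<close> once \<open>h M \<le> \<epsilon> / (4 \<pi>)\<close>, which makes the least-squares solution
  \<open>xc\<close> unique. The samples of \<open>P\<^sub>M x\<close> differ from the data by at most
  \<open>\<surd>\<tau>\<^sub>n (\<parallel>x - P\<^sub>M x\<parallel>\<^sub>1\<^sub>,\<^sub>w + \<eta>)\<close> and \<open>\<Sum> \<tau>\<^sub>n = 1\<close>, so the Pythagorean identity for the normal
  equations gives \<open>(1 - \<epsilon>) \<parallel>P\<^sub>M x - xc\<parallel>\<^sup>2 \<le> (\<parallel>x - P\<^sub>M x\<parallel>\<^sub>1\<^sub>,\<^sub>w + \<eta>)\<^sup>2\<close>.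
\<close>

section \<open>Trigonometric polynomials\<close>

lemma fourier_has_vector_derivative:
  "(fourier j has_vector_derivative (\<i> * of_int j * of_real pi) * fourier j s) (at s within S)"
proof -
  let ?A = "\<i> * of_int j * of_real pi"
  have "fourier j = (\<lambda>t. exp (t *\<^sub>R ?A))"
    by (rule ext) (simp add: fourier_def scaleR_conv_of_real algebra_simps)
  then show ?thesis
    using exp_scaleR_has_vector_derivative_right[of ?A s S] by (simp add: mult.commute)
qed

lemma fourier_mult_cnj: "fourier j s * cnj (fourier k s) = fourier (j - k) s"
  by (simp add: fourier_def exp_cnj flip: exp_add) (simp add: algebra_simps)

lemma norm_fourier [simp]: "cmod (fourier j s) = 1"
  unfolding fourier_def
  by (metis mult.commute mult.left_commute norm_exp_i_times of_real_mult of_real_of_int_eq)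

lemma fourier_has_integral: "(fourier m has_integral (if m = 0 then 2 else 0)) {-1..1}"
proof (cases "m = 0")
  case True
  then have "fourier m = (\<lambda>_. 1)" by (auto simp: fourier_def)
  then show ?thesis
    using True has_integral_const_real[of "1::complex" "-1::real" 1] by (simp add: scaleR_conv_of_real)
next
  case False
  let ?c = "\<i> * of_int m * of_real pi"
  have "((\<lambda>s. fourier m s / ?c) has_vector_derivative fourier m s) (at s within {-1..1})" for s
    using has_vector_derivative_divide[OF fourier_has_vector_derivative[of m s], where a = ?c] False
    by simp
  then have "(fourier m has_integral (fourier m 1 / ?c - fourier m (-1) / ?c)) {-1..1}"
    by (intro fundamental_theorem_of_calculus) auto
  moreover have "fourier m 1 = fourier m (-1)"
  proof -
    have "fourier m (-1) * exp (complex_of_real (2 * of_int m * pi) * \<i>) = fourier m 1"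
      by (simp add: fourier_def flip: exp_add) (simp add: algebra_simps)
    moreover have "exp (complex_of_real (2 * of_int m * pi) * \<i>) = 1"
      by (rule exp_integer_2pi) simp
    ultimately show ?thesis by simp
  qed
  ultimately show ?thesis using False by simp
qed

definition trig_poly :: "int set \<Rightarrow> (int \<Rightarrow> complex) \<Rightarrow> real \<Rightarrow> complex" where
  "trig_poly K a s = (\<Sum>j\<in>K. a j * fourier j s)"

lemma trig_poly_has_vector_derivative:
  "(trig_poly K a has_vector_derivative trig_poly K (\<lambda>j. a j * (\<i> * of_int j * of_real pi)) s)
     (at s within S)"
  unfolding trig_poly_def
proof (rule has_vector_derivative_sum)
  fix j
  show "((\<lambda>s. a j * fourier j s) has_vector_derivative a j * (\<i> * of_int j * of_real pi) * fourier j s)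
          (at s within S)"
    using has_vector_derivative_mult_right[OF fourier_has_vector_derivative, of "a j" j s S]
    by (simp add: algebra_simps)
qed

lemma continuous_on_trig_poly: "continuous_on S (trig_poly K a)"
  by (metis continuous_on_eq_continuous_within has_vector_derivative_continuous
      trig_poly_has_vector_derivative)

lemma trig_poly_norm_sq_has_integral:
  assumes "finite K"
  shows "((\<lambda>s. (cmod (trig_poly K a s))\<^sup>2) has_integral 2 * (\<Sum>j\<in>K. (cmod (a j))\<^sup>2)) {-1..1}"
proof -
  have expand: "complex_of_real ((cmod (trig_poly K a s))\<^sup>2)
      = (\<Sum>j\<in>K. \<Sum>k\<in>K. a j * cnj (a k) * fourier (j - k) s)" for s
  proof -
    have "complex_of_real ((cmod (trig_poly K a s))\<^sup>2) = trig_poly K a s * cnj (trig_poly K a s)"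
      by (simp add: complex_norm_square flip: of_real_power)
    also have "\<dots> = (\<Sum>j\<in>K. \<Sum>k\<in>K. a j * cnj (a k) * (fourier j s * cnj (fourier k s)))"
      unfolding trig_poly_def cnj_sum sum_product by (simp add: algebra_simps)
    finally show ?thesis by (simp add: fourier_mult_cnj)
  qed
  have "(\<Sum>j\<in>K. \<Sum>k\<in>K. a j * cnj (a k) * (if j - k = 0 then 2 else 0))
      = (\<Sum>j\<in>K. complex_of_real (2 * (cmod (a j))\<^sup>2))"
  proof -
    have "(\<Sum>j\<in>K. \<Sum>k\<in>K. a j * cnj (a k) * (if j - k = 0 then 2 else 0)) = (\<Sum>j\<in>K. 2 * (a j * cnj (a j)))"
      using assms by (simp add: if_distrib mult_ac cong: if_cong)
    then show ?thesis by (simp only: complex_norm_square of_real_mult) simp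
  qed
  moreover have "((\<lambda>s. \<Sum>j\<in>K. \<Sum>k\<in>K. a j * cnj (a k) * fourier (j - k) s) has_integral
      (\<Sum>j\<in>K. \<Sum>k\<in>K. a j * cnj (a k) * (if j - k = 0 then 2 else 0))) {-1..1}"
    by (intro has_integral_sum assms has_integral_mult_right fourier_has_integral)
  ultimately have "((\<lambda>s. complex_of_real ((cmod (trig_poly K a s))\<^sup>2)) has_integral
      complex_of_real (2 * (\<Sum>j\<in>K. (cmod (a j))\<^sup>2))) {-1..1}"
    unfolding expand by (simp add: sum_distrib_left)
  from has_integral_Re[OF this] show ?thesis by simp
qed

lemma sum_norm_sq_derivative_coeffs_le:
  "(\<Sum>j\<in>{- int M..<int M}. (cmod (a j * (\<i> * of_int j * of_real pi)))\<^sup>2)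
     \<le> (pi * real M)\<^sup>2 * (\<Sum>j\<in>{- int M..<int M}. (cmod (a j))\<^sup>2)"
  unfolding sum_distrib_left
proof (rule sum_mono)
  fix j assume "j \<in> {- int M..<int M}"
  then have "(real_of_int j)\<^sup>2 \<le> (real M)\<^sup>2"
    by (intro abs_le_square_iff[THEN iffD1]) auto
  then have "(cmod (a j))\<^sup>2 * (pi\<^sup>2 * (real_of_int j)\<^sup>2) \<le> (cmod (a j))\<^sup>2 * (pi\<^sup>2 * (real M)\<^sup>2)"
    by (intro mult_left_mono) auto
  then show "(cmod (a j * (\<i> * of_int j * of_real pi)))\<^sup>2 \<le> (pi * real M)\<^sup>2 * (cmod (a j))\<^sup>2"
    by (simp add: norm_mult power_mult_distrib mult_ac)
qed

section \<open>A sampling inequality on an interval\<close>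

lemma weighted_sq_le_of_le_add:
  fixes u v d \<delta> :: real
  assumes "0 < \<delta>" "\<delta> < 1" "0 \<le> u" "0 \<le> v" "0 \<le> d" "v \<le> u + d"
  shows "(1 - \<delta>) * v\<^sup>2 \<le> u\<^sup>2 + (1/\<delta> - 1) * d\<^sup>2"
proof -
  have "(1 - \<delta>) * v\<^sup>2 \<le> (1 - \<delta>) * (u + d)\<^sup>2"
    using assms by (intro mult_left_mono power_mono) auto
  moreover have "u\<^sup>2 + (1/\<delta> - 1) * d\<^sup>2 - (1 - \<delta>) * (u + d)\<^sup>2 = (\<delta> * u - (1 - \<delta>) * d)\<^sup>2 / \<delta>"
    using assms by (simp add: field_simps power2_eq_square)
  moreover have "0 \<le> (\<delta> * u - (1 - \<delta>) * d)\<^sup>2 / \<delta>" using assms by simp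
  ultimately show ?thesis by linarith
qed

lemma integral_square_le:
  fixes f :: "real \<Rightarrow> real"
  assumes "a \<le> b" "continuous_on {a..b} f"
  shows "(integral {a..b} f)\<^sup>2 \<le> (b - a) * integral {a..b} (\<lambda>s. (f s)\<^sup>2)"
proof (cases "a = b")
  case False
  then have L: "0 < b - a" using assms by simp
  define I where "I = integral {a..b} f"
  define J where "J = integral {a..b} (\<lambda>s. (f s)\<^sup>2)"
  define c where "c = I / (b - a)"
  have fI: "(f has_integral I) {a..b}"
    unfolding I_def using assms integrable_continuous_interval by (metis integrable_integral)
  have fJ: "((\<lambda>s. (f s)\<^sup>2) has_integral J) {a..b}"
    unfolding J_def using assms by (intro integrable_integral integrable_continuous_interval continuous_intros)
  have "((\<lambda>s. (f s)\<^sup>2 - 2 * c * f s + c\<^sup>2) has_integral J - 2 * c * I + (b - a) * c\<^sup>2) {a..b}"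
    using has_integral_const_real[of "c\<^sup>2" a b] assms
    by (intro has_integral_add has_integral_diff fJ has_integral_mult_right fI) auto
  moreover have "0 \<le> (f s)\<^sup>2 - 2 * c * f s + c\<^sup>2" for s
    using zero_le_power2[of "f s - c"] by (simp add: power2_diff algebra_simps)
  ultimately have "0 \<le> J - 2 * c * I + (b - a) * c\<^sup>2"
    by (rule has_integral_nonneg)
  also have "J - 2 * c * I + (b - a) * c\<^sup>2 = J - I\<^sup>2 / (b - a)"
  proof -
    have "(b - a) * c\<^sup>2 = I\<^sup>2 / (b - a)" "2 * c * I = 2 * (I\<^sup>2 / (b - a))"
      unfolding c_def using L by (simp_all add: power2_eq_square)
    then show ?thesis by simp
  qed
  finally show ?thesis unfolding I_def[symmetric] J_def[symmetric] using L by (simp add: field_simps)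
qed simp

lemma norm_diff_le_integral_norm_derivative:
  fixes f f' :: "real \<Rightarrow> 'a::banach"
  assumes deriv: "\<And>s. s \<in> {a..b} \<Longrightarrow> (f has_vector_derivative f' s) (at s within {a..b})"
    and cont: "continuous_on {a..b} f'"
    and s: "s \<in> {a..b}" "s' \<in> {a..b}"
  shows "norm (f s - f s') \<le> integral {a..b} (\<lambda>u. norm (f' u))"
proof -
  have le: "norm (f v - f u) \<le> integral {a..b} (\<lambda>u. norm (f' u))"
    if "u \<le> v" "u \<in> {a..b}" "v \<in> {a..b}" for u v
  proof -
    have sub: "{u..v} \<subseteq> {a..b}" using that by auto
    have "(f' has_integral f v - f u) {u..v}"
      using that(1) sub
      by (intro fundamental_theorem_of_calculus) (auto intro: has_vector_derivative_within_subset[OF deriv])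
    then have "norm (f v - f u) = norm (integral {u..v} f')" by (simp add: integral_unique)
    also have "\<dots> \<le> integral {u..v} (\<lambda>u. norm (f' u))"
      using continuous_on_subset[OF cont sub]
      by (intro integral_norm_bound_integral integrable_continuous_interval continuous_on_norm) auto
    also have "\<dots> \<le> integral {a..b} (\<lambda>u. norm (f' u))"
      using sub continuous_on_subset[OF cont sub] cont
      by (intro integral_subset_le integrable_continuous_interval continuous_on_norm) auto
    finally show ?thesis .
  qed
  show ?thesis
    using le[of s s'] le[of s' s] s by (cases "s \<le> s'") (auto simp: norm_minus_commute)
qed

lemma sampling_ineq_interval:
  fixes f f' :: "real \<Rightarrow> 'a::banach"
  assumes deriv: "\<And>s. s \<in> {a..b} \<Longrightarrow> (f has_vector_derivative f' s) (at s within {a..b})"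
    and cont: "continuous_on {a..b} f'"
    and s0: "s0 \<in> {a..b}" and \<delta>: "0 < \<delta>" "\<delta> < 1"
  shows "(1 - \<delta>) * integral {a..b} (\<lambda>s. (norm (f s))\<^sup>2)
           - (1/\<delta> - 1) * (b - a)\<^sup>2 * integral {a..b} (\<lambda>s. (norm (f' s))\<^sup>2)
         \<le> (b - a) * (norm (f s0))\<^sup>2"
proof -
  define I where "I = integral {a..b} (\<lambda>s. norm (f' s))"
  define J where "J = integral {a..b} (\<lambda>s. (norm (f' s))\<^sup>2)"
  define L where "L = b - a"
  have L0: "0 \<le> L" using s0 unfolding L_def by simp
  have I0: "0 \<le> I" unfolding I_def
    using cont by (intro integral_nonneg integrable_continuous_interval continuous_on_norm) auto
  have J0: "0 \<le> J" unfolding J_def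
    using cont by (intro integral_nonneg integrable_continuous_interval continuous_intros) auto
  have contf: "continuous_on {a..b} f"
    using deriv has_vector_derivative_continuous continuous_on_eq_continuous_within by blast
  have pointwise: "(1 - \<delta>) * (norm (f s))\<^sup>2 - (1/\<delta> - 1) * I\<^sup>2 \<le> (norm (f s0))\<^sup>2"
    if s: "s \<in> {a..b}" for s
  proof -
    have "norm (f s) \<le> norm (f s0) + norm (f s - f s0)" by (rule norm_triangle_sub)
    also have "\<dots> \<le> norm (f s0) + I"
      unfolding I_def using norm_diff_le_integral_norm_derivative[OF deriv cont s s0] by simp
    finally have "norm (f s) \<le> norm (f s0) + I" .
    then show ?thesis
      using weighted_sq_le_of_le_add[OF \<delta>, of "norm (f s0)" "norm (f s)" I] I0 by simp
  qed
  have "((\<lambda>s. (1 - \<delta>) * (norm (f s))\<^sup>2 - (1/\<delta> - 1) * I\<^sup>2) has_integral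
      (1 - \<delta>) * integral {a..b} (\<lambda>s. (norm (f s))\<^sup>2) - L * ((1/\<delta> - 1) * I\<^sup>2)) {a..b}"
    using has_integral_const_real[of "(1/\<delta> - 1) * I\<^sup>2" a b] contf L0 unfolding L_def
    by (intro has_integral_diff has_integral_mult_right integrable_integral
        integrable_continuous_interval continuous_intros) auto
  moreover have "((\<lambda>s. (norm (f s0))\<^sup>2) has_integral L * (norm (f s0))\<^sup>2) {a..b}"
    using has_integral_const_real[of "(norm (f s0))\<^sup>2" a b] L0 unfolding L_def by simp
  ultimately have integrated: "(1 - \<delta>) * integral {a..b} (\<lambda>s. (norm (f s))\<^sup>2) - L * ((1/\<delta> - 1) * I\<^sup>2)
      \<le> L * (norm (f s0))\<^sup>2"
    by (rule has_integral_le) (use pointwise in auto)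
  have "I\<^sup>2 \<le> L * J"
    unfolding I_def J_def L_def using s0 cont by (intro integral_square_le continuous_on_norm) auto
  then have "L * I\<^sup>2 \<le> L\<^sup>2 * J"
    using mult_left_mono[OF _ L0] by (metis mult.assoc power2_eq_square)
  then have "(1/\<delta> - 1) * (L * I\<^sup>2) \<le> (1/\<delta> - 1) * (L\<^sup>2 * J)"
    using \<delta> by (intro mult_left_mono) auto
  with integrated show ?thesis unfolding J_def L_def by (simp add: mult_ac)
qed

section \<open>Voronoi cells\<close>

text \<open>The Voronoi cell with the endpoints \<open>\<plusminus>1\<close> of the domain added, which makes it a compact interval.\<close>

definition closed_cell :: "nat \<Rightarrow> (nat \<Rightarrow> real) \<Rightarrow> nat \<Rightarrow> real set" where
  "closed_cell N t n = {s \<in> {-1..1}. \<forall>m\<in>{1..N}. \<bar>s - t n\<bar> \<le> \<bar>s - t m\<bar>}"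

lemma is_interval_closer: "is_interval {s::real. \<bar>s - a\<bar> \<le> \<bar>s - b\<bar>}"
proof -
  have "{s::real. \<bar>s - a\<bar> \<le> \<bar>s - b\<bar>} =
      (if a < b then {..(a + b) / 2} else if b < a then {(a + b) / 2..} else UNIV)"
    by (auto simp: abs_if field_simps)
  then show ?thesis by simp
qed

lemma closed_cell_interval: "\<exists>a b. closed_cell N t n = {a..b}"
proof -
  have eq: "closed_cell N t n = {-1..1} \<inter> (\<Inter>m\<in>{1..N}. {s. \<bar>s - t n\<bar> \<le> \<bar>s - t m\<bar>})"
    unfolding closed_cell_def by auto
  have "compact (closed_cell N t n)"
    unfolding eq compact_eq_bounded_closed
    by (intro conjI bounded_Int closed_Int closed_INT ballI closed_Collect_le continuous_intros) auto
  moreover have "is_interval (closed_cell N t n)"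
    unfolding eq is_interval_convex_1
    by (intro convex_Int convex_INT ballI) (auto simp flip: is_interval_convex_1 intro: is_interval_closer)
  ultimately show ?thesis using connected_compact_interval_1 is_interval_connected by blast
qed

lemma closed_cell_subset: "closed_cell N t n \<subseteq> {-1..1}"
  unfolding closed_cell_def by auto

lemma voronoi_eq_closed_cell: "voronoi N t n = closed_cell N t n \<inter> {-1<..<1}"
  unfolding voronoi_def closed_cell_def by auto

lemma closed_cell_cover:
  assumes "0 < N" "s \<in> {-1..1}"
  shows "\<exists>n\<in>{1..N}. s \<in> closed_cell N t n"
proof -
  have "Min ((\<lambda>n. \<bar>s - t n\<bar>) ` {1..N}) \<in> (\<lambda>n. \<bar>s - t n\<bar>) ` {1..N}"
    using assms(1) by (intro Min_in) auto
  then obtain n where n: "n \<in> {1..N}" "Min ((\<lambda>n. \<bar>s - t n\<bar>) ` {1..N}) = \<bar>s - t n\<bar>"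
    by auto
  then have "\<forall>m\<in>{1..N}. \<bar>s - t n\<bar> \<le> \<bar>s - t m\<bar>" by (metis Min_le finite_atLeastAtMost finite_imageI image_eqI)
  then show ?thesis using n(1) assms(2) unfolding closed_cell_def by auto
qed

lemma closed_cell_overlap:
  assumes "inj_on t {1..N}" "n \<in> {1..N}" "m \<in> {1..N}" "n \<noteq> m"
    and "s \<in> closed_cell N t n" "s \<in> closed_cell N t m"
  shows "s = (t n + t m) / 2"
proof -
  have "\<bar>s - t n\<bar> = \<bar>s - t m\<bar>" using assms(2,3,5,6) unfolding closed_cell_def by force
  moreover have "t n \<noteq> t m" using assms(1-4) by (meson inj_on_contraD)
  ultimately show ?thesis by (auto simp: abs_if split: if_splits)
qed

text \<open>The closed cells overlap only in the finitely many midpoints between nodes.\<close>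

lemma sum_integral_closed_cells:
  fixes g :: "real \<Rightarrow> real"
  assumes "0 < N" "inj_on t {1..N}" "g integrable_on {-1..1}"
  shows "(\<Sum>n\<in>{1..N}. integral (closed_cell N t n) g) = integral {-1..1} g"
proof -
  let ?mid = "(\<lambda>(n, m). (t n + t m) / 2) ` ({1..N} \<times> {1..N})"
  let ?restr = "\<lambda>n x. if x \<in> closed_cell N t n then g x else 0"
  have "(?restr n has_integral integral (closed_cell N t n) g) {-1..1}" for n
  proof -
    obtain a b where ab: "closed_cell N t n = {a..b}" using closed_cell_interval by blast
    then have "g integrable_on closed_cell N t n"
      using assms(3) closed_cell_subset by (metis box_real(2) integrable_on_subcbox)
    then show ?thesis
      using has_integral_restrict[OF closed_cell_subset] integrable_integral by blast
  qed
  then have sum: "((\<lambda>x. \<Sum>n\<in>{1..N}. ?restr n x) has_integral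
      (\<Sum>n\<in>{1..N}. integral (closed_cell N t n) g)) {-1..1}"
    by (intro has_integral_sum) auto
  have "(\<Sum>n\<in>{1..N}. ?restr n x) = g x" if x: "x \<in> {-1..1} - ?mid" for x
  proof -
    obtain n0 where n0: "n0 \<in> {1..N}" "x \<in> closed_cell N t n0"
      using closed_cell_cover[OF assms(1)] x by blast
    have "x \<notin> closed_cell N t n" if n: "n \<in> {1..N}" "n \<noteq> n0" for n
    proof
      assume "x \<in> closed_cell N t n"
      then have "x = (t n + t n0) / 2" using closed_cell_overlap[OF assms(2) n(1) n0(1) n(2)] n0(2) by blast
      then have "x \<in> ?mid" using n n0 by force
      then show False using x by blast
    qed
    then have "(\<Sum>n\<in>{1..N}. ?restr n x) = (\<Sum>n\<in>{1..N}. if n = n0 then g x else 0)"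
      using n0(2) by (intro sum.cong) auto
    then show ?thesis using n0(1) by simp
  qed
  moreover have "negligible ?mid" by (intro negligible_finite) auto
  ultimately have "(g has_integral (\<Sum>n\<in>{1..N}. integral (closed_cell N t n) g)) {-1..1}"
    using has_integral_spike[OF _ _ sum, of ?mid g] by auto
  then show ?thesis by (simp add: integral_unique)
qed

context
  fixes N :: nat and t :: "nat \<Rightarrow> real"
  assumes N_pos: "0 < N" and nodes_in: "\<forall>n\<in>{1..N}. t n \<in> {-1..1}"
begin

lemma bdd_above_dist_nodes: "bdd_above ((\<lambda>s. Min ((\<lambda>n. \<bar>s - t n\<bar>) ` {1..N})) ` {-1<..<1})"
proof (rule bdd_aboveI2)
  fix s :: real assume "s \<in> {-1<..<1}"
  moreover have "Min ((\<lambda>n. \<bar>s - t n\<bar>) ` {1..N}) \<le> \<bar>s - t 1\<bar>"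
    using N_pos by (intro Min_le) auto
  moreover have "t 1 \<in> {-1..1}" using nodes_in N_pos by auto
  ultimately show "Min ((\<lambda>n. \<bar>s - t n\<bar>) ` {1..N}) \<le> 2" by auto
qed

lemma fill_dist_nonneg: "0 \<le> fill_dist N t"
proof -
  have "0 \<le> Min ((\<lambda>n. \<bar>0 - t n\<bar>) ` {1..N})" using N_pos by (subst Min_ge_iff) auto
  also have "\<dots> \<le> fill_dist N t"
    unfolding fill_dist_def by (rule cSup_upper[OF imageI bdd_above_dist_nodes]) simp
  finally show ?thesis .
qed

lemma dist_node_le_fill_dist:
  assumes "n \<in> {1..N}" "s \<in> closed_cell N t n" "s \<in> {-1<..<1}"
  shows "\<bar>s - t n\<bar> \<le> fill_dist N t"
proof -
  have "Min ((\<lambda>n. \<bar>s - t n\<bar>) ` {1..N}) = \<bar>s - t n\<bar>"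
    using assms(1,2) by (intro Min_eqI) (auto simp: closed_cell_def)
  moreover have "Min ((\<lambda>n. \<bar>s - t n\<bar>) ` {1..N}) \<le> fill_dist N t"
    unfolding fill_dist_def using assms(3) by (intro cSup_upper bdd_above_dist_nodes) auto
  ultimately show ?thesis by simp
qed

lemma closed_cell_length:
  assumes n: "n \<in> {1..N}" and ab: "closed_cell N t n = {a..b}"
  shows "a \<le> t n" "t n \<le> b" "b - a \<le> 2 * fill_dist N t"
proof -
  let ?h = "fill_dist N t"
  have "t n \<in> closed_cell N t n" using n nodes_in unfolding closed_cell_def by auto
  then show tn: "a \<le> t n" "t n \<le> b" using ab by auto
  have "{a<..<b} \<subseteq> {t n - ?h..t n + ?h}"
  proof
    fix s assume s: "s \<in> {a<..<b}"
    then have "s \<in> closed_cell N t n" "s \<in> {-1<..<1}"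
      using ab closed_cell_subset[of N t n] by auto
    then show "s \<in> {t n - ?h..t n + ?h}" using dist_node_le_fill_dist[OF n] by fastforce
  qed
  then have "a < b \<Longrightarrow> {a..b} \<subseteq> {t n - ?h..t n + ?h}"
    by (metis closure_greaterThanLessThan closure_minimal closed_atLeastAtMost)
  then show "b - a \<le> 2 * ?h" using fill_dist_nonneg by force
qed

lemma tau_eq:
  assumes n: "n \<in> {1..N}" and ab: "closed_cell N t n = {a..b}"
  shows "tau N t n = (b - a) / 2"
proof -
  have "integral (voronoi N t n) (\<lambda>_. 1/2::real) = integral (closed_cell N t n) (\<lambda>_. 1/2)"
  proof (rule integral_spike_set)
    have "closed_cell N t n - voronoi N t n \<subseteq> {-1, 1}"
      unfolding voronoi_eq_closed_cell using closed_cell_subset by fastforce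
    then show "negligible {x \<in> closed_cell N t n - voronoi N t n. (1/2::real) \<noteq> 0}"
      by (auto intro: negligible_subset[OF negligible_finite[of "{-1::real, 1}"]])
  qed (auto simp: voronoi_eq_closed_cell intro: negligible_subset[OF negligible_empty])
  then show ?thesis
    using closed_cell_length[OF n ab] unfolding tau_def ab by simp
qed

lemma tau_nonneg:
  assumes n: "n \<in> {1..N}"
  shows "0 \<le> tau N t n"
proof -
  obtain a b where ab: "closed_cell N t n = {a..b}" using closed_cell_interval by blast
  then show ?thesis using tau_eq[OF n ab] closed_cell_length[OF n ab] by simp
qed

lemma sum_tau:
  assumes "inj_on t {1..N}"
  shows "(\<Sum>n\<in>{1..N}. tau N t n) = 1"
proof -
  have "tau N t n = integral (closed_cell N t n) (\<lambda>_. 1/2)" if n: "n \<in> {1..N}" for n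
  proof -
    obtain a b where ab: "closed_cell N t n = {a..b}" using closed_cell_interval by blast
    then show ?thesis using tau_eq[OF n ab] closed_cell_length[OF n ab] by simp
  qed
  then have "(\<Sum>n\<in>{1..N}. tau N t n) = (\<Sum>n\<in>{1..N}. integral (closed_cell N t n) (\<lambda>_. 1/2))"
    by (rule sum.cong[OF refl])
  also have "\<dots> = integral {-1..1::real} (\<lambda>_. 1/2::real)"
    by (intro sum_integral_closed_cells N_pos assms integrable_const_ivl)
  finally show ?thesis by simp
qed

section \<open>A Marcinkiewicz--Zygmund inequality\<close>

lemma closed_cell_sampling_ineq:
  fixes a :: "int \<Rightarrow> complex"
  assumes n: "n \<in> {1..N}" and \<delta>: "0 < \<delta>" "\<delta> < 1"
  defines "a' \<equiv> \<lambda>j. a j * (\<i> * of_int j * of_real pi)"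
  shows "(1 - \<delta>) * integral (closed_cell N t n) (\<lambda>s. (cmod (trig_poly K a s))\<^sup>2)
           - (1/\<delta> - 1) * (4 * (fill_dist N t)\<^sup>2)
               * integral (closed_cell N t n) (\<lambda>s. (cmod (trig_poly K a' s))\<^sup>2)
         \<le> 2 * tau N t n * (cmod (trig_poly K a (t n)))\<^sup>2"
proof -
  obtain \<alpha> \<beta> where cell: "closed_cell N t n = {\<alpha>..\<beta>}" using closed_cell_interval by blast
  note len = closed_cell_length[OF n cell]
  have "(\<beta> - \<alpha>)\<^sup>2 \<le> (2 * fill_dist N t)\<^sup>2"
    using len by (intro power_mono) auto
  then have "(1/\<delta> - 1) * (\<beta> - \<alpha>)\<^sup>2 * integral {\<alpha>..\<beta>} (\<lambda>s. (cmod (trig_poly K a' s))\<^sup>2)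
      \<le> (1/\<delta> - 1) * (4 * (fill_dist N t)\<^sup>2) * integral {\<alpha>..\<beta>} (\<lambda>s. (cmod (trig_poly K a' s))\<^sup>2)"
    using \<delta> by (intro mult_right_mono mult_left_mono integral_nonneg
        integrable_continuous_interval continuous_intros continuous_on_trig_poly)
      (auto simp: power_mult_distrib)
  moreover have "(1 - \<delta>) * integral {\<alpha>..\<beta>} (\<lambda>s. (cmod (trig_poly K a s))\<^sup>2)
      - (1/\<delta> - 1) * (\<beta> - \<alpha>)\<^sup>2 * integral {\<alpha>..\<beta>} (\<lambda>s. (cmod (trig_poly K a' s))\<^sup>2)
      \<le> (\<beta> - \<alpha>) * (cmod (trig_poly K a (t n)))\<^sup>2"
    unfolding a'_def using len \<delta>
    by (intro sampling_ineq_interval trig_poly_has_vector_derivative continuous_on_trig_poly) auto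
  moreover have "(\<beta> - \<alpha>) * (cmod (trig_poly K a (t n)))\<^sup>2 = 2 * tau N t n * (cmod (trig_poly K a (t n)))\<^sup>2"
    using tau_eq[OF n cell] by simp
  ultimately show ?thesis
    unfolding cell by linarith
qed

lemma marcinkiewicz_zygmund:
  fixes a :: "int \<Rightarrow> complex" and M :: nat
  assumes inj: "inj_on t {1..N}" and \<delta>: "0 < \<delta>" "\<delta> < 1"
  defines "K \<equiv> {- int M..<int M}"
  shows "((1 - \<delta>) - (1/\<delta> - 1) * (4 * (fill_dist N t)\<^sup>2) * (pi * real M)\<^sup>2) * (\<Sum>j\<in>K. (cmod (a j))\<^sup>2)
         \<le> (\<Sum>n\<in>{1..N}. tau N t n * (cmod (trig_poly K a (t n)))\<^sup>2)"
proof -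
  define a' where "a' = (\<lambda>j. a j * (\<i> * of_int j * of_real pi))"
  define C where "C = (1/\<delta> - 1) * (4 * (fill_dist N t)\<^sup>2)"
  define S where "S b = (\<Sum>j\<in>K. (cmod (b j))\<^sup>2)" for b
  have C0: "0 \<le> C" unfolding C_def using \<delta> by (intro mult_nonneg_nonneg) (auto simp: field_simps)
  have integral_cells: "(\<Sum>n\<in>{1..N}. integral (closed_cell N t n) (\<lambda>s. (cmod (trig_poly K b s))\<^sup>2))
      = 2 * S b" for b
    using sum_integral_closed_cells[OF N_pos inj] trig_poly_norm_sq_has_integral[of K b]
    unfolding K_def S_def
    by (simp add: integral_unique integrable_continuous_interval continuous_intros continuous_on_trig_poly)
  let ?P = "\<lambda>n. (cmod (trig_poly K a (t n)))\<^sup>2"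
  let ?cell_integral = "\<lambda>b n. integral (closed_cell N t n) (\<lambda>s. (cmod (trig_poly K b s))\<^sup>2)"
  have "(1 - \<delta>) * (2 * S a) - C * (2 * S a')
      = (\<Sum>n\<in>{1..N}. (1 - \<delta>) * ?cell_integral a n - C * ?cell_integral a' n)"
    unfolding sum_subtractf sum_distrib_left[symmetric] integral_cells ..
  also have "\<dots> \<le> (\<Sum>n\<in>{1..N}. 2 * tau N t n * ?P n)"
    unfolding C_def a'_def by (intro sum_mono closed_cell_sampling_ineq \<delta>)
  also have "\<dots> = 2 * (\<Sum>n\<in>{1..N}. tau N t n * ?P n)"
    by (simp add: sum_distrib_left mult.assoc)
  finally have "(1 - \<delta>) * S a - C * S a' \<le> (\<Sum>n\<in>{1..N}. tau N t n * ?P n)" by simp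
  moreover have "C * S a' \<le> C * ((pi * real M)\<^sup>2 * S a)"
    unfolding S_def K_def a'_def using C0 by (intro mult_left_mono sum_norm_sq_derivative_coeffs_le)
  ultimately show ?thesis
    unfolding C_def S_def by (simp add: algebra_simps)
qed

lemma sampling_frame_bound:
  fixes a :: "int \<Rightarrow> complex" and M :: nat
  assumes inj: "inj_on t {1..N}" and \<epsilon>: "0 < \<epsilon>" "\<epsilon> < 1"
    and M: "0 < M" and fill: "fill_dist N t \<le> \<epsilon> / (4 * pi) / real M"
  defines "K \<equiv> {- int M..<int M}"
  shows "(1 - \<epsilon>) * (\<Sum>j\<in>K. (cmod (a j))\<^sup>2) \<le> (\<Sum>n\<in>{1..N}. tau N t n * (cmod (trig_poly K a (t n)))\<^sup>2)"
proof -
  define h where "h = fill_dist N t"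
  have hM: "0 \<le> h * real M" "h * real M \<le> \<epsilon> / (4 * pi)"
    using fill M fill_dist_nonneg unfolding h_def by (simp_all add: field_simps)
  have "(4 * h\<^sup>2) * (pi * real M)\<^sup>2 = 4 * pi\<^sup>2 * (h * real M)\<^sup>2"
    by (simp add: power_mult_distrib)
  also have "\<dots> \<le> 4 * pi\<^sup>2 * (\<epsilon> / (4 * pi))\<^sup>2"
    using hM by (intro mult_left_mono power_mono) auto
  also have "\<dots> = \<epsilon>\<^sup>2 / 4" by (simp add: power2_eq_square field_simps)
  finally have "(1 / (\<epsilon>/2) - 1) * ((4 * h\<^sup>2) * (pi * real M)\<^sup>2) \<le> (2 / \<epsilon>) * (\<epsilon>\<^sup>2 / 4)"
    using \<epsilon> by (intro mult_mono) (auto simp: field_simps)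
  then have "1 - \<epsilon> \<le> (1 - \<epsilon>/2) - (1 / (\<epsilon>/2) - 1) * (4 * h\<^sup>2) * (pi * real M)\<^sup>2"
    using \<epsilon> by (simp add: power2_eq_square mult.assoc)
  then have "(1 - \<epsilon>) * (\<Sum>j\<in>K. (cmod (a j))\<^sup>2)
      \<le> ((1 - \<epsilon>/2) - (1 / (\<epsilon>/2) - 1) * (4 * h\<^sup>2) * (pi * real M)\<^sup>2) * (\<Sum>j\<in>K. (cmod (a j))\<^sup>2)"
    by (intro mult_right_mono sum_nonneg) auto
  also have "\<dots> \<le> (\<Sum>n\<in>{1..N}. tau N t n * (cmod (trig_poly K a (t n)))\<^sup>2)"
    unfolding h_def K_def using \<epsilon> by (intro marcinkiewicz_zygmund inj) auto
  finally show ?thesis .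
qed

end

section \<open>Least squares\<close>

definition mat_vec :: "(nat \<Rightarrow> int \<Rightarrow> complex) \<Rightarrow> int set \<Rightarrow> (int \<Rightarrow> complex) \<Rightarrow> nat \<Rightarrow> complex" where
  "mat_vec U K z n = (\<Sum>j\<in>K. U n j * z j)"

definition normal_eqs ::
  "(nat \<Rightarrow> int \<Rightarrow> complex) \<Rightarrow> nat set \<Rightarrow> int set \<Rightarrow> (int \<Rightarrow> complex) \<Rightarrow> (nat \<Rightarrow> complex) \<Rightarrow> bool" where
  "normal_eqs U R K z y \<longleftrightarrow> (\<forall>j\<in>K. (\<Sum>n\<in>R. cnj (U n j) * (mat_vec U K z n - y n)) = 0)"

lemma sum_cnj_mat_vec_mult:
  "(\<Sum>n\<in>R. cnj (mat_vec U K w n) * v n) = (\<Sum>j\<in>K. cnj (w j) * (\<Sum>n\<in>R. cnj (U n j) * v n))"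
  unfolding mat_vec_def cnj_sum sum_distrib_left sum_distrib_right
  by (subst sum.swap) (simp add: algebra_simps)

lemma normal_eqs_orthogonal:
  "normal_eqs U R K z y \<Longrightarrow> (\<Sum>n\<in>R. cnj (mat_vec U K w n) * (mat_vec U K z n - y n)) = 0"
  unfolding sum_cnj_mat_vec_mult normal_eqs_def by simp

lemma mat_vec_diff: "mat_vec U K (\<lambda>j. z j - w j) n = mat_vec U K z n - mat_vec U K w n"
  unfolding mat_vec_def by (simp add: sum_subtractf algebra_simps)

lemma sum_norm_sq_eq_0_iff:
  assumes "finite R"
  shows "(\<Sum>n\<in>R. cnj (r n) * r n) = 0 \<longleftrightarrow> (\<forall>n\<in>R. r n = 0)"
proof -
  have "(\<Sum>n\<in>R. cnj (r n) * r n) = complex_of_real (\<Sum>n\<in>R. (cmod (r n))\<^sup>2)"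
    unfolding of_real_sum complex_norm_square by (simp add: mult.commute)
  moreover have "(\<Sum>n\<in>R. (cmod (r n))\<^sup>2) = 0 \<longleftrightarrow> (\<forall>n\<in>R. r n = 0)"
    using assms by (simp add: sum_nonneg_eq_0_iff)
  ultimately show ?thesis by (simp only: of_real_eq_0_iff)
qed

text \<open>
  Given solutions \<open>z\<^sub>0\<close> for the data and \<open>z\<^sub>1\<close> for the new
  column \<open>k\<close>, the residual \<open>r\<close> of column \<open>k\<close> is orthogonal to the old columns, and
  \<open>z\<^sub>0 + c (e\<^sub>k - z\<^sub>1)\<close> solves the enlarged system with \<open>c = \<sigma> / \<parallel>r\<parallel>\<^sup>2\<close>; if \<open>r = 0\<close> then also
  \<open>\<sigma> = 0\<close>, so the junk value \<open>c = 0\<close> works.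
\<close>

lemma normal_eqs_exists:
  assumes "finite R" "finite K"
  shows "\<exists>z. (\<forall>j. j \<notin> K \<longrightarrow> z j = 0) \<and> normal_eqs U R K z y"
  using assms(2)
proof (induction K arbitrary: y rule: finite_induct)
  case empty
  show ?case by (rule exI[of _ "\<lambda>_. 0"]) (simp add: normal_eqs_def)
next
  case (insert k K)
  obtain z0 where z0: "\<forall>j. j \<notin> K \<longrightarrow> z0 j = 0" "normal_eqs U R K z0 y"
    using insert.IH by blast
  obtain z1 where z1: "\<forall>j. j \<notin> K \<longrightarrow> z1 j = 0" "normal_eqs U R K z1 (\<lambda>n. U n k)"
    using insert.IH by blast
  define r where "r n = U n k - mat_vec U K z1 n" for n
  define S where "S = (\<Sum>n\<in>R. cnj (r n) * r n)"
  define \<sigma> where "\<sigma> = (\<Sum>n\<in>R. cnj (r n) * (y n - mat_vec U K z0 n))"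
  define c where "c = \<sigma> / S"
  define z where "z j = z0 j + c * (of_bool (j = k) - z1 j)" for j
  have r_orth: "(\<Sum>n\<in>R. cnj (U n j) * r n) = 0" if "j \<in> K" for j
  proof -
    have "(\<Sum>n\<in>R. cnj (U n j) * r n) = - (\<Sum>n\<in>R. cnj (U n j) * (mat_vec U K z1 n - U n k))"
      unfolding r_def by (simp add: sum_negf[symmetric] algebra_simps)
    then show ?thesis using z1(2) that unfolding normal_eqs_def by simp
  qed
  have "c * S = \<sigma>"
  proof (cases "S = 0")
    case True
    then show ?thesis using sum_norm_sq_eq_0_iff[OF assms(1)] unfolding S_def \<sigma>_def by simp
  qed (simp add: c_def)
  have "(\<Sum>j\<in>K. U n j * z j) = (\<Sum>j\<in>K. U n j * z0 j - c * (U n j * z1 j))" for n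
    using insert.hyps(2) by (intro sum.cong) (auto simp: z_def algebra_simps)
  then have "mat_vec U K z n = mat_vec U K z0 n - c * mat_vec U K z1 n" for n
    unfolding mat_vec_def by (simp add: sum_subtractf sum_distrib_left)
  moreover have "z k = c" using z0(1) z1(1) insert.hyps(2) unfolding z_def by simp
  ultimately have Uz: "mat_vec U (insert k K) z n = mat_vec U K z0 n + c * r n" for n
    using insert.hyps unfolding r_def by (simp add: mat_vec_def algebra_simps)
  have orth_K: "(\<Sum>n\<in>R. cnj (U n j) * (mat_vec U K z0 n + c * r n - y n)) = 0" if "j \<in> K" for j
  proof -
    have "(\<Sum>n\<in>R. cnj (U n j) * (mat_vec U K z0 n + c * r n - y n))
        = (\<Sum>n\<in>R. cnj (U n j) * (mat_vec U K z0 n - y n)) + c * (\<Sum>n\<in>R. cnj (U n j) * r n)"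
      by (simp add: sum.distrib[symmetric] sum_distrib_left algebra_simps)
    then show ?thesis using z0(2) r_orth[OF that] that unfolding normal_eqs_def by simp
  qed
  have "(\<Sum>n\<in>R. cnj (r n) * (mat_vec U K z0 n + c * r n - y n)) = c * S - \<sigma>"
    unfolding S_def \<sigma>_def by (simp add: sum.distrib sum_distrib_left sum_subtractf algebra_simps)
  moreover have "(\<Sum>n\<in>R. cnj (mat_vec U K z1 n) * (mat_vec U K z0 n + c * r n - y n)) = 0"
    unfolding sum_cnj_mat_vec_mult using orth_K by simp
  moreover have "(\<Sum>n\<in>R. cnj (U n k) * (mat_vec U K z0 n + c * r n - y n))
      = (\<Sum>n\<in>R. cnj (r n) * (mat_vec U K z0 n + c * r n - y n))
        + (\<Sum>n\<in>R. cnj (mat_vec U K z1 n) * (mat_vec U K z0 n + c * r n - y n))"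
    unfolding r_def by (simp add: sum.distrib[symmetric] algebra_simps)
  ultimately have orth_k: "(\<Sum>n\<in>R. cnj (U n k) * (mat_vec U K z0 n + c * r n - y n)) = 0"
    using \<open>c * S = \<sigma>\<close> by simp
  have "normal_eqs U R (insert k K) z y"
    unfolding normal_eqs_def Uz using orth_K orth_k by blast
  moreover have "\<forall>j. j \<notin> insert k K \<longrightarrow> z j = 0" using z0(1) z1(1) unfolding z_def by auto
  ultimately show ?case by blast
qed

lemma normal_eqs_pythagoras:
  assumes "normal_eqs U R K z y"
  shows "(\<Sum>n\<in>R. (cmod (mat_vec U K z' n - y n))\<^sup>2)
       = (\<Sum>n\<in>R. (cmod (mat_vec U K z n - y n))\<^sup>2)
         + (\<Sum>n\<in>R. (cmod (mat_vec U K (\<lambda>j. z' j - z j) n))\<^sup>2)"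
proof -
  define A where "A n = mat_vec U K (\<lambda>j. z' j - z j) n" for n
  define B where "B n = mat_vec U K z n - y n" for n
  have split: "mat_vec U K z' n - y n = A n + B n" for n
    unfolding A_def B_def mat_vec_diff by simp
  have o1: "(\<Sum>n\<in>R. cnj (A n) * B n) = 0"
    unfolding A_def B_def by (rule normal_eqs_orthogonal[OF assms])
  have "(\<Sum>n\<in>R. A n * cnj (B n)) = cnj (\<Sum>n\<in>R. cnj (A n) * B n)"
    by (simp add: cnj_sum mult.commute)
  then have o2: "(\<Sum>n\<in>R. A n * cnj (B n)) = 0" using o1 by simp
  have "complex_of_real (\<Sum>n\<in>R. (cmod (A n + B n))\<^sup>2) = (\<Sum>n\<in>R. (A n + B n) * cnj (A n + B n))"
    unfolding of_real_sum complex_norm_square ..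
  also have "\<dots> = (\<Sum>n\<in>R. B n * cnj (B n)) + (\<Sum>n\<in>R. A n * cnj (A n))
        + (\<Sum>n\<in>R. cnj (A n) * B n) + (\<Sum>n\<in>R. A n * cnj (B n))"
    by (simp add: sum.distrib[symmetric] algebra_simps)
  also have "\<dots> = complex_of_real ((\<Sum>n\<in>R. (cmod (B n))\<^sup>2) + (\<Sum>n\<in>R. (cmod (A n))\<^sup>2))"
    unfolding of_real_add of_real_sum complex_norm_square o1 o2 by simp
  finally show ?thesis
    unfolding split A_def[symmetric] B_def[symmetric] using of_real_eq_iff by blast
qed

lemma least_squares_unique:
  assumes R: "finite R" and K: "finite K" and c: "0 < c"
    and frame: "\<And>z. c * (\<Sum>j\<in>K. (cmod (z j))\<^sup>2) \<le> (\<Sum>n\<in>R. (cmod (mat_vec U K z n))\<^sup>2)"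
  obtains xc where "\<forall>j. j \<notin> K \<longrightarrow> xc j = 0" "normal_eqs U R K xc y"
    and "\<And>z. \<forall>j. j \<notin> K \<longrightarrow> z j = 0 \<Longrightarrow>
           (\<forall>z'. (\<forall>j. j \<notin> K \<longrightarrow> z' j = 0) \<longrightarrow>
              (\<Sum>n\<in>R. (cmod (mat_vec U K z n - y n))\<^sup>2) \<le> (\<Sum>n\<in>R. (cmod (mat_vec U K z' n - y n))\<^sup>2))
           \<longleftrightarrow> z = xc"
proof -
  obtain xc where xc: "\<forall>j. j \<notin> K \<longrightarrow> xc j = 0" "normal_eqs U R K xc y"
    using normal_eqs_exists[OF R K] by blast
  note pyth = normal_eqs_pythagoras[OF xc(2)]
  have minimal: "(\<Sum>n\<in>R. (cmod (mat_vec U K xc n - y n))\<^sup>2) \<le> (\<Sum>n\<in>R. (cmod (mat_vec U K z' n - y n))\<^sup>2)"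
    for z'
    unfolding pyth[of z'] by (simp add: sum_nonneg)
  have unique: "z = xc"
    if z: "\<forall>j. j \<notin> K \<longrightarrow> z j = 0"
      and le: "(\<Sum>n\<in>R. (cmod (mat_vec U K z n - y n))\<^sup>2) \<le> (\<Sum>n\<in>R. (cmod (mat_vec U K xc n - y n))\<^sup>2)"
    for z
  proof
    fix j
    have "(\<Sum>n\<in>R. (cmod (mat_vec U K (\<lambda>j. z j - xc j) n))\<^sup>2) \<le> 0"
      using le unfolding pyth[of z] by simp
    then have "c * (\<Sum>j\<in>K. (cmod (z j - xc j))\<^sup>2) \<le> 0"
      using frame[of "\<lambda>j. z j - xc j"] by simp
    then have "(\<Sum>j\<in>K. (cmod (z j - xc j))\<^sup>2) \<le> 0"
      using c by (simp add: mult_le_0_iff)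
    then have "(\<Sum>j\<in>K. (cmod (z j - xc j))\<^sup>2) = 0"
      by (meson antisym sum_nonneg zero_le_power2)
    then have "\<forall>j\<in>K. z j = xc j" using K by (simp add: sum_nonneg_eq_0_iff)
    then show "z j = xc j" using z xc(1) by (cases "j \<in> K") auto
  qed
  show ?thesis
  proof (rule that[OF xc])
    fix z :: "int \<Rightarrow> complex" assume z: "\<forall>j. j \<notin> K \<longrightarrow> z j = 0"
    show "(\<forall>z'. (\<forall>j. j \<notin> K \<longrightarrow> z' j = 0) \<longrightarrow>
            (\<Sum>n\<in>R. (cmod (mat_vec U K z n - y n))\<^sup>2) \<le> (\<Sum>n\<in>R. (cmod (mat_vec U K z' n - y n))\<^sup>2))
          \<longleftrightarrow> z = xc"
      using unique[OF z] minimal xc(1) by blast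
  qed
qed

section \<open>Truncation error\<close>

lemma norm_series_minus_trig_poly_le:
  fixes x :: "int \<Rightarrow> complex" and w :: "int \<Rightarrow> real" and M :: nat
  assumes xs: "(\<lambda>j. cmod (x j)) summable_on UNIV" and w: "\<forall>i. 1 \<le> w i"
    and ws: "(\<lambda>i. w i * cmod (x i - projM M x i)) summable_on UNIV"
  shows "cmod ((\<Sum>\<^sub>\<infinity>j. x j * fourier j s) - trig_poly {- int M..<int M} (projM M x) s)
         \<le> wl1norm w (\<lambda>j. x j - projM M x j)"
proof -
  define K where "K = {- int M..<int M}"
  define tail where "tail j = x j - projM M x j" for j
  have tail_le: "cmod (tail j) \<le> cmod (x j)" and proj_le: "cmod (projM M x j) \<le> cmod (x j)" for j
    unfolding tail_def projM_def by auto
  have proj_summable: "(\<lambda>j. projM M x j * fourier j s) summable_on UNIV"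
    by (rule Infinite_Sum.abs_summable_summable, rule Infinite_Sum.abs_summable_on_comparison_test'[OF xs])
      (simp add: norm_mult proj_le)
  have tail_abs_summable: "(\<lambda>j. norm (tail j * fourier j s)) summable_on UNIV"
    by (rule Infinite_Sum.abs_summable_on_comparison_test'[OF xs]) (simp add: norm_mult tail_le)
  have "trig_poly K (projM M x) s = (\<Sum>\<^sub>\<infinity>j\<in>K. projM M x j * fourier j s)"
    unfolding trig_poly_def K_def by (simp add: infsum_finite)
  also have "\<dots> = (\<Sum>\<^sub>\<infinity>j. projM M x j * fourier j s)"
    by (rule infsum_cong_neutral) (auto simp: projM_def K_def)
  finally have "(\<Sum>\<^sub>\<infinity>j. x j * fourier j s) - trig_poly K (projM M x) s = (\<Sum>\<^sub>\<infinity>j. tail j * fourier j s)"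
    using infsum_add[OF proj_summable Infinite_Sum.abs_summable_summable[OF tail_abs_summable]]
    unfolding tail_def by (simp add: algebra_simps)
  then have "cmod ((\<Sum>\<^sub>\<infinity>j. x j * fourier j s) - trig_poly K (projM M x) s) \<le> (\<Sum>\<^sub>\<infinity>j. cmod (tail j))"
    using norm_infsum_bound[OF tail_abs_summable] by (simp add: norm_mult)
  also have "\<dots> \<le> (\<Sum>\<^sub>\<infinity>j. w j * cmod (tail j))"
  proof (rule infsum_mono)
    show "(\<lambda>j. cmod (tail j)) summable_on UNIV"
      using Infinite_Sum.abs_summable_on_comparison_test'[OF xs, of tail] tail_le by simp
    show "(\<lambda>j. w j * cmod (tail j)) summable_on UNIV" using ws unfolding tail_def .
    show "cmod (tail j) \<le> w j * cmod (tail j)" for j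
      using mult_right_mono[of 1 "w j" "cmod (tail j)"] w by simp
  qed
  finally show ?thesis unfolding wl1norm_def tail_def K_def .
qed

lemma wl1norm_nonneg: "\<forall>i. 0 \<le> w i \<Longrightarrow> 0 \<le> wl1norm w z"
  unfolding wl1norm_def by (intro infsum_nonneg mult_nonneg_nonneg) auto

lemma infsum_norm_sq_le_wl1norm_sq:
  fixes z :: "int \<Rightarrow> complex" and w :: "int \<Rightarrow> real"
  assumes w: "\<forall>i. 1 \<le> w i" and ws: "(\<lambda>i. w i * cmod (z i)) summable_on UNIV"
  shows "(\<lambda>j. (cmod (z j))\<^sup>2) summable_on UNIV" "(\<Sum>\<^sub>\<infinity>j. (cmod (z j))\<^sup>2) \<le> (wl1norm w z)\<^sup>2"
proof -
  define W where "W = wl1norm w z"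
  have norm_le: "cmod (z j) \<le> w j * cmod (z j)" for j
    using mult_right_mono[of 1 "w j" "cmod (z j)"] w by simp
  have term_le: "w j * cmod (z j) \<le> W" for j
    using finite_sum_le_infsum[OF ws, of "{j}"] norm_le order_trans[OF norm_ge_zero]
    unfolding W_def wl1norm_def by auto
  have W0: "0 \<le> W" using norm_le[of 0] term_le[of 0] by (meson norm_ge_zero order_trans)
  have sq_le: "(cmod (z j))\<^sup>2 \<le> W * (w j * cmod (z j))" for j
  proof -
    have "(cmod (z j))\<^sup>2 \<le> W * cmod (z j)"
      unfolding power2_eq_square using norm_le[of j] term_le[of j] by (intro mult_right_mono) auto
    also have "\<dots> \<le> W * (w j * cmod (z j))"
      using norm_le W0 by (intro mult_left_mono) auto
    finally show ?thesis .
  qed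
  have weighted: "(\<lambda>j. W * (w j * cmod (z j))) summable_on UNIV"
    by (intro summable_on_cmult_right ws)
  show summable: "(\<lambda>j. (cmod (z j))\<^sup>2) summable_on UNIV"
    by (rule summable_on_comparison_test[OF weighted]) (auto intro: sq_le)
  have "(\<Sum>\<^sub>\<infinity>j. (cmod (z j))\<^sup>2) \<le> (\<Sum>\<^sub>\<infinity>j. W * (w j * cmod (z j)))"
    by (intro infsum_mono summable weighted sq_le)
  also have "\<dots> = W\<^sup>2"
    unfolding infsum_cmult_right' W_def wl1norm_def by (simp add: power2_eq_square)
  finally show "(\<Sum>\<^sub>\<infinity>j. (cmod (z j))\<^sup>2) \<le> (wl1norm w z)\<^sup>2" unfolding W_def .
qed

lemma l2norm_le_tail_plus_head:
  fixes x xc :: "int \<Rightarrow> complex" and w :: "int \<Rightarrow> real" and M :: nat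
  assumes xc: "\<forall>j. j \<notin> {- int M..<int M} \<longrightarrow> xc j = 0"
    and w: "\<forall>i. 1 \<le> w i" and ws: "(\<lambda>i. w i * cmod (x i - projM M x i)) summable_on UNIV"
  shows "l2norm (\<lambda>j. x j - xc j)
         \<le> wl1norm w (\<lambda>j. x j - projM M x j) + sqrt (\<Sum>j\<in>{- int M..<int M}. (cmod (x j - xc j))\<^sup>2)"
proof -
  define K where "K = {- int M..<int M}"
  define head where "head j = (if j \<in> K then (cmod (x j - xc j))\<^sup>2 else 0)" for j
  define tail where "tail j = (cmod (x j - projM M x j))\<^sup>2" for j
  note tail_bound = infsum_norm_sq_le_wl1norm_sq[OF w ws]
  have "(cmod (x j - xc j))\<^sup>2 = tail j + head j" for j
    using xc unfolding tail_def head_def projM_def K_def by auto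
  moreover have "((\<lambda>j. (cmod (x j - xc j))\<^sup>2) summable_on K) = (head summable_on UNIV)"
    by (rule summable_on_cong_neutral) (auto simp: head_def)
  then have "head summable_on UNIV" by (simp add: K_def)
  moreover have "infsum (\<lambda>j. (cmod (x j - xc j))\<^sup>2) K = infsum head UNIV"
    by (rule infsum_cong_neutral) (auto simp: head_def)
  then have "infsum head UNIV = (\<Sum>j\<in>K. (cmod (x j - xc j))\<^sup>2)" by (simp add: K_def)
  ultimately have "l2norm (\<lambda>j. x j - xc j) = sqrt (infsum tail UNIV + (\<Sum>j\<in>K. (cmod (x j - xc j))\<^sup>2))"
    unfolding l2norm_def using infsum_add[of tail UNIV head] tail_bound(1)
    unfolding tail_def by simp
  also have "\<dots> \<le> sqrt (infsum tail UNIV) + sqrt (\<Sum>j\<in>K. (cmod (x j - xc j))\<^sup>2)"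
    by (intro sqrt_add_le_add_sqrt sum_nonneg infsum_nonneg) (auto simp: tail_def)
  also have "\<dots> \<le> wl1norm w (\<lambda>j. x j - projM M x j) + sqrt (\<Sum>j\<in>K. (cmod (x j - xc j))\<^sup>2)"
  proof -
    have "0 \<le> wl1norm w (\<lambda>j. x j - projM M x j)"
      using w by (intro wl1norm_nonneg) (auto intro: order_trans[OF zero_le_one])
    then have "sqrt (infsum tail UNIV) \<le> wl1norm w (\<lambda>j. x j - projM M x j)"
      using tail_bound(2) unfolding tail_def by (simp add: real_le_lsqrt)
    then show ?thesis by simp
  qed
  finally show ?thesis unfolding K_def by simp
qed

lemma sqrt_le_div_sqrt:
  fixes a b c :: real
  assumes "0 < c" "0 \<le> b" "c * a \<le> b\<^sup>2"
  shows "sqrt a \<le> b / sqrt c"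
proof -
  have "a \<le> (b / sqrt c)\<^sup>2" using assms by (simp add: power_divide field_simps)
  then show ?thesis using assms by (simp add: real_le_lsqrt)
qed

lemma mat_vec_Umat:
  "mat_vec (Umat N t) K z n = complex_of_real (sqrt (tau N t n)) * trig_poly K z (t n)"
  unfolding mat_vec_def Umat_def trig_poly_def by (simp add: sum_distrib_left mult_ac)

lemma lsq_residual_eq:
  "lsq_residual N t M y z
     = sqrt (\<Sum>n\<in>{1..N}. (cmod (mat_vec (Umat N t) {- int M..<int M} z n - y n))\<^sup>2)"
proof -
  have "(\<Sum>j\<in>{- int M..<int M}. Umat N t n j * projM M z j) = mat_vec (Umat N t) {- int M..<int M} z n" for n
    unfolding mat_vec_def projM_def by (intro sum.cong) auto
  then show ?thesis unfolding lsq_residual_def by simp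
qed

context
  fixes N :: nat and t :: "nat \<Rightarrow> real"
  assumes N_pos: "0 < N" and nodes_in: "\<forall>n\<in>{1..N}. t n \<in> {-1..1}"
begin

lemma norm_mat_vec_Umat_sq:
  "n \<in> {1..N} \<Longrightarrow> (cmod (mat_vec (Umat N t) K z n))\<^sup>2 = tau N t n * (cmod (trig_poly K z (t n)))\<^sup>2"
  using tau_nonneg[OF N_pos nodes_in] by (simp add: mat_vec_Umat norm_mult power_mult_distrib)

lemma projM_residual_le:
  fixes x :: "int \<Rightarrow> complex" and w :: "int \<Rightarrow> real" and M :: nat
  assumes xs: "(\<lambda>j. cmod (x j)) summable_on UNIV"
    and w: "\<forall>i. 1 \<le> w i" and ws: "(\<lambda>i. w i * cmod (x i - projM M x i)) summable_on UNIV"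
    and e: "cmod (e n) \<le> \<eta>" and n: "n \<in> {1..N}"
  defines "y \<equiv> \<lambda>n. complex_of_real (sqrt (tau N t n)) * ((\<Sum>\<^sub>\<infinity>j. x j * fourier j (t n)) + e n)"
  shows "(cmod (mat_vec (Umat N t) {- int M..<int M} (projM M x) n - y n))\<^sup>2
         \<le> tau N t n * (wl1norm w (\<lambda>j. x j - projM M x j) + \<eta>)\<^sup>2"
proof -
  let ?err = "(\<Sum>\<^sub>\<infinity>j. x j * fourier j (t n)) - trig_poly {- int M..<int M} (projM M x) (t n)"
  have tau: "0 \<le> tau N t n" using tau_nonneg[OF N_pos nodes_in n] .
  have "y n - mat_vec (Umat N t) {- int M..<int M} (projM M x) n
      = complex_of_real (sqrt (tau N t n)) * (?err + e n)"
    unfolding y_def mat_vec_Umat by (simp add: algebra_simps)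
  then have "cmod (mat_vec (Umat N t) {- int M..<int M} (projM M x) n - y n)
      = sqrt (tau N t n) * cmod (?err + e n)"
    using tau by (simp add: norm_mult norm_minus_commute)
  also have "\<dots> \<le> sqrt (tau N t n) * (wl1norm w (\<lambda>j. x j - projM M x j) + \<eta>)"
  proof (rule mult_left_mono)
    show "cmod (?err + e n) \<le> wl1norm w (\<lambda>j. x j - projM M x j) + \<eta>"
      using norm_series_minus_trig_poly_le[OF xs w ws, of "t n"] e norm_triangle_ineq[of ?err "e n"]
      by linarith
  qed (simp add: tau)
  finally have "(cmod (mat_vec (Umat N t) {- int M..<int M} (projM M x) n - y n))\<^sup>2
      \<le> (sqrt (tau N t n) * (wl1norm w (\<lambda>j. x j - projM M x j) + \<eta>))\<^sup>2"
    by (rule power_mono[OF _ norm_ge_zero])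
  also have "\<dots> = tau N t n * (wl1norm w (\<lambda>j. x j - projM M x j) + \<eta>)\<^sup>2"
    using tau by (simp add: power_mult_distrib)
  finally show ?thesis .
qed

lemma fourier_least_squares_recovery:
  fixes \<epsilon> :: real and M :: nat and x :: "int \<Rightarrow> complex" and e :: "nat \<Rightarrow> complex"
  assumes \<epsilon>: "0 < \<epsilon>" "\<epsilon> < 1" and M: "0 < M" and inj: "inj_on t {1..N}"
    and fill: "fill_dist N t \<le> \<epsilon> / (4 * pi) / real M"
    and xs: "(\<lambda>j. cmod (x j)) summable_on UNIV" and e: "\<forall>n\<in>{1..N}. cmod (e n) \<le> \<eta>"
  defines "y \<equiv> \<lambda>n. complex_of_real (sqrt (tau N t n)) * ((\<Sum>\<^sub>\<infinity>j. x j * fourier j (t n)) + e n)"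
    and "K \<equiv> {- int M..<int M}"
  obtains xc where "\<forall>j. j \<notin> K \<longrightarrow> xc j = 0"
    and "\<And>z. \<forall>j. j \<notin> K \<longrightarrow> z j = 0 \<Longrightarrow>
           (\<forall>z'. (\<forall>j. j \<notin> K \<longrightarrow> z' j = 0) \<longrightarrow> lsq_residual N t M y z \<le> lsq_residual N t M y z')
           \<longleftrightarrow> z = xc"
    and "\<And>w. \<forall>i. 1 \<le> w i \<Longrightarrow> (\<lambda>i. w i * cmod (x i - projM M x i)) summable_on UNIV \<Longrightarrow>
           l2norm (\<lambda>j. x j - xc j)
             \<le> (1 + 1 / sqrt (1 - \<epsilon>)) * wl1norm w (\<lambda>j. x j - projM M x j) + \<eta> / sqrt (1 - \<epsilon>)"
proof -
  let ?U = "Umat N t" and ?R = "{1..N}"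
  have frame: "(1 - \<epsilon>) * (\<Sum>j\<in>K. (cmod (z j))\<^sup>2) \<le> (\<Sum>n\<in>?R. (cmod (mat_vec ?U K z n))\<^sup>2)" for z
  proof -
    have "(1 - \<epsilon>) * (\<Sum>j\<in>K. (cmod (z j))\<^sup>2) \<le> (\<Sum>n\<in>?R. tau N t n * (cmod (trig_poly K z (t n)))\<^sup>2)"
      unfolding K_def by (rule sampling_frame_bound[OF N_pos nodes_in inj \<epsilon> M fill])
    also have "\<dots> = (\<Sum>n\<in>?R. (cmod (mat_vec ?U K z n))\<^sup>2)"
      by (rule sum.cong[OF refl]) (simp add: norm_mat_vec_Umat_sq)
    finally show ?thesis .
  qed
  obtain xc where xc: "\<forall>j. j \<notin> K \<longrightarrow> xc j = 0" "normal_eqs ?U ?R K xc y"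
    and minimizer: "\<And>z. \<forall>j. j \<notin> K \<longrightarrow> z j = 0 \<Longrightarrow>
           (\<forall>z'. (\<forall>j. j \<notin> K \<longrightarrow> z' j = 0) \<longrightarrow>
              (\<Sum>n\<in>?R. (cmod (mat_vec ?U K z n - y n))\<^sup>2) \<le> (\<Sum>n\<in>?R. (cmod (mat_vec ?U K z' n - y n))\<^sup>2))
           \<longleftrightarrow> z = xc"
    by (rule least_squares_unique[of ?R K "1 - \<epsilon>" ?U y, OF _ _ _ frame]) (use \<epsilon> in \<open>auto simp: K_def\<close>)
  have lsq: "lsq_residual N t M y z = sqrt (\<Sum>n\<in>?R. (cmod (mat_vec ?U K z n - y n))\<^sup>2)" for z
    unfolding K_def by (rule lsq_residual_eq)
  show ?thesis
  proof (rule that[OF xc(1)])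
    show "(\<forall>z'. (\<forall>j. j \<notin> K \<longrightarrow> z' j = 0) \<longrightarrow> lsq_residual N t M y z \<le> lsq_residual N t M y z')
        \<longleftrightarrow> z = xc" if "\<forall>j. j \<notin> K \<longrightarrow> z j = 0" for z
      using minimizer[OF that] unfolding lsq real_sqrt_le_iff .
  next
    fix w :: "int \<Rightarrow> real"
    assume w: "\<forall>i. 1 \<le> w i" and ws: "(\<lambda>i. w i * cmod (x i - projM M x i)) summable_on UNIV"
    define W where "W = wl1norm w (\<lambda>j. x j - projM M x j)"
    have "0 \<le> W" unfolding W_def using w by (intro wl1norm_nonneg) (auto intro: order_trans[OF zero_le_one])
    moreover have "cmod (e 1) \<le> \<eta>" using e N_pos by simp
    then have "0 \<le> \<eta>" by (meson norm_ge_zero order_trans)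
    ultimately have W\<eta>: "0 \<le> W + \<eta>" by simp
    have "(\<Sum>j\<in>K. (cmod (x j - xc j))\<^sup>2) = (\<Sum>j\<in>K. (cmod (projM M x j - xc j))\<^sup>2)"
      by (rule sum.cong) (auto simp: projM_def K_def)
    then have "(1 - \<epsilon>) * (\<Sum>j\<in>K. (cmod (x j - xc j))\<^sup>2)
        \<le> (\<Sum>n\<in>?R. (cmod (mat_vec ?U K (\<lambda>j. projM M x j - xc j) n))\<^sup>2)"
      using frame[of "\<lambda>j. projM M x j - xc j"] by simp
    also have "\<dots> \<le> (\<Sum>n\<in>?R. (cmod (mat_vec ?U K (projM M x) n - y n))\<^sup>2)"
      unfolding normal_eqs_pythagoras[OF xc(2), of "projM M x"] by (simp add: sum_nonneg)
    also have "\<dots> \<le> (\<Sum>n\<in>?R. tau N t n * (W + \<eta>)\<^sup>2)"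
      unfolding W_def K_def y_def using e by (intro sum_mono projM_residual_le xs w ws) auto
    also have "\<dots> = (W + \<eta>)\<^sup>2"
      using sum_tau[OF N_pos nodes_in inj] by (simp flip: sum_distrib_right)
    finally have "sqrt (\<Sum>j\<in>K. (cmod (x j - xc j))\<^sup>2) \<le> (W + \<eta>) / sqrt (1 - \<epsilon>)"
      using \<epsilon> W\<eta> by (intro sqrt_le_div_sqrt) auto
    moreover have "l2norm (\<lambda>j. x j - xc j) \<le> W + sqrt (\<Sum>j\<in>K. (cmod (x j - xc j))\<^sup>2)"
      unfolding W_def K_def using xc(1) w ws by (intro l2norm_le_tail_plus_head) (auto simp: K_def)
    ultimately show "l2norm (\<lambda>j. x j - xc j) \<le> (1 + 1 / sqrt (1 - \<epsilon>)) * W + \<eta> / sqrt (1 - \<epsilon>)"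
      by (simp add: distrib_right add_divide_distrib)
  qed
qed

end

theorem theorem8p2:
  fixes \<epsilon> :: real
  assumes "0 < \<epsilon>" "\<epsilon> < 1"
  shows "\<exists>c>0. \<forall>(M::nat) (N::nat) (t::nat \<Rightarrow> real) (x::int \<Rightarrow> complex) (e::nat \<Rightarrow> complex) (\<eta>::real).
     0 < M \<and> 0 < N \<and> inj_on t {1..N} \<and> (\<forall>n\<in>{1..N}. t n \<in> {-1..1})
     \<and> fill_dist N t \<le> c / real M
     \<and> (\<lambda>j. cmod (x j)) summable_on UNIV
     \<and> (\<forall>n\<in>{1..N}. cmod (e n) \<le> \<eta>)
     \<longrightarrow>
     (let f = (\<lambda>s. \<Sum>\<^sub>\<infinity>j. x j * fourier j s);
          y = (\<lambda>n. complex_of_real (sqrt (tau N t n)) * (f (t n) + e n));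
          is_sol = (\<lambda>z. (\<forall>j. j \<notin> {- int M..<int M} \<longrightarrow> z j = 0) \<and>
                        (\<forall>z'. (\<forall>j. j \<notin> {- int M..<int M} \<longrightarrow> z' j = 0) \<longrightarrow>
                               lsq_residual N t M y z \<le> lsq_residual N t M y z'))
      in \<exists>xc. is_sol xc \<and> (\<forall>z. is_sol z \<longrightarrow> z = xc) \<and>
           (\<forall>w::int \<Rightarrow> real. (\<forall>i. 1 \<le> w i) \<and>
                (\<lambda>i. w i * cmod ((\<lambda>j. x j - projM M x j) i)) summable_on UNIV \<longrightarrow>
              l2norm (\<lambda>j. x j - xc j)
                \<le> (1 + 1 / sqrt (1 - \<epsilon>)) * wl1norm w (\<lambda>j. x j - projM M x j)
                  + \<eta> / sqrt (1 - \<epsilon>)))"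
proof (intro exI[of _ "\<epsilon> / (4 * pi)"] conjI allI impI)
  show "0 < \<epsilon> / (4 * pi)" using assms by simp
qed (unfold Let_def, elim conjE, rule fourier_least_squares_recovery, (assumption | rule assms)+, blast)

end
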